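(* Let $N\ge2$, $g\ge1$, and let $A(z)=\sum_{k=0}^{g-1}z^kA^{(k)}$ ($A^{(g-1)}\ne0$) be a purely non-diagonal polynomial loop $\mathbb{T}\to\mathrm{U}_N(\mathbb{C})$ of genus $g$. Let $T_i$, $i=0,\dots,N-1$, be the operators on $L^2(\mathbb{T})$ given by $(T_if)(z)=m_i(z)f(z^N)$, $m_i(z)=\sum_{j=0}^{N-1}A_{i,j}(z^N)z^j$. Let $r_0=\lfloor (gN-1)/(N-1)\rfloor$, $\mathcal{K}=\operatorname{span}\{z^{-k}:0\le k\le r_0\}$, $P$ the orthogonal projection onto $\mathcal{K}$, $V_i:=PT_i|_{\mathcal{K}}\in\mathcal{B}(\mathcal{K})$, and $\sigma\colon\mathcal{B}(\mathcal{K})\to\mathcal{B}(\mathcal{K})$, $\sigma(X)=\sum_iV_iXV_i^*$. Then there is no faithful state $\rho$ on $\mathcal{B}(\mathcal{K})$ satisfying $\rho\circ\sigma=\rho$.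
   Context: A polynomial loop $D\colon\mathbb{T}\to\mathrm{U}_d(\mathbb{C})$ is diagonal if $D(z)=V\,\mathrm{diag}(z^{n_0},\dots,z^{n_{d-1}})$ for some $V\in\mathrm{U}_d(\mathbb{C})$ and integers $n_i\ge0$. A polynomial loop $A\colon\mathbb{T}\to\mathrm{U}_N(\mathbb{C})$ is purely non-diagonal if there is no decomposition $N=d_0+b+d_1$ with $d_0>0$ or $d_1>0$, diagonal loops $D_0,D_1$ of sizes $d_0,d_1$, a polynomial loop $B\colon\mathbb{T}\to\mathrm{U}_b(\mathbb{C})$ and $V\in\mathrm{U}_N(\mathbb{C})$ with $A(z)=V\,(D_0(z)\oplus B(z)\oplus D_1(z))$ (block diagonal). $A_{i,j}(z)$ are the entries of $A(z)$; $\mathbb{T}$ is the unit circle with normalized Haar measure. *)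

theory Defs
  imports "HOL-Analysis.Analysis" "Jordan_Normal_Form.Schur_Decomposition"
begin

definition unitary_mat :: "nat \<Rightarrow> complex mat \<Rightarrow> bool" where
  "unitary_mat n U \<longleftrightarrow> U \<in> carrier_mat n n \<and> U * mat_adjoint U = 1\<^sub>m n \<and> mat_adjoint U * U = 1\<^sub>m n"

definition poly_mat_fun :: "nat \<Rightarrow> nat \<Rightarrow> (nat \<Rightarrow> complex mat) \<Rightarrow> complex \<Rightarrow> complex mat" where
  "poly_mat_fun n deg C z = mat n n (\<lambda>(i,j). \<Sum>k<deg. z ^ k * C k $$ (i,j))"

definition poly_loop :: "nat \<Rightarrow> (complex \<Rightarrow> complex mat) \<Rightarrow> bool" where
  "poly_loop n L \<longleftrightarrow> (\<exists>deg C. (\<forall>k<deg. C k \<in> carrier_mat n n) \<and>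
      (\<forall>z. cmod z = 1 \<longrightarrow> L z = poly_mat_fun n deg C z \<and> unitary_mat n (L z)))"

definition diagonal_loop :: "nat \<Rightarrow> (complex \<Rightarrow> complex mat) \<Rightarrow> bool" where
  "diagonal_loop d D \<longleftrightarrow> (\<exists>V (e :: nat \<Rightarrow> nat). unitary_mat d V \<and>
      (\<forall>z. cmod z = 1 \<longrightarrow> D z = V * mat d d (\<lambda>(i,j). if i = j then z ^ e i else 0)))"

definition block_diag3 :: "nat \<Rightarrow> nat \<Rightarrow> nat \<Rightarrow> complex mat \<Rightarrow> complex mat \<Rightarrow> complex mat \<Rightarrow> complex mat" where
  "block_diag3 d0 b d1 X0 X1 X2 =
     four_block_mat X0 (0\<^sub>m d0 (b + d1)) (0\<^sub>m (b + d1) d0)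
       (four_block_mat X1 (0\<^sub>m b d1) (0\<^sub>m d1 b) X2)"

definition purely_non_diagonal :: "nat \<Rightarrow> (complex \<Rightarrow> complex mat) \<Rightarrow> bool" where
  "purely_non_diagonal N A \<longleftrightarrow> \<not> (\<exists>d0 b d1 D0 B D1 V.
      N = d0 + b + d1 \<and> (d0 > 0 \<or> d1 > 0) \<and>
      diagonal_loop d0 D0 \<and> diagonal_loop d1 D1 \<and> poly_loop b B \<and> unitary_mat N V \<and>
      (\<forall>z. cmod z = 1 \<longrightarrow> A z = V * block_diag3 d0 b d1 (D0 z) (B z) (D1 z)))"

text \<open>Parametrisation of the unit circle; integrating over t \<in> [0,1] gives normalized Haar measure.\<close>
definition circ :: "real \<Rightarrow> complex" where
  "circ t = cis (2 * pi * t)"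

definition l2_inner :: "(complex \<Rightarrow> complex) \<Rightarrow> (complex \<Rightarrow> complex) \<Rightarrow> complex" where
  "l2_inner f h = integral {0..1} (\<lambda>t. cnj (f (circ t)) * h (circ t))"

definition filter_m :: "nat \<Rightarrow> (complex \<Rightarrow> complex mat) \<Rightarrow> nat \<Rightarrow> complex \<Rightarrow> complex" where
  "filter_m N A i z = (\<Sum>j<N. A (z ^ N) $$ (i,j) * z ^ j)"

definition T_op :: "nat \<Rightarrow> (complex \<Rightarrow> complex mat) \<Rightarrow> nat \<Rightarrow> (complex \<Rightarrow> complex) \<Rightarrow> (complex \<Rightarrow> complex)" where
  "T_op N A i f = (\<lambda>z. filter_m N A i z * f (z ^ N))"

text \<open>Matrix of V_i = P T_i|_K in the orthonormal basis e_k(z) = z^{-k}, 0 \<le> k < n: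
  (V_i)_{l,k} = <e_l, T_i e_k>.\<close>
definition V_mat :: "nat \<Rightarrow> (complex \<Rightarrow> complex mat) \<Rightarrow> nat \<Rightarrow> nat \<Rightarrow> complex mat" where
  "V_mat N A n i = mat n n (\<lambda>(l,k).
     l2_inner (\<lambda>z. inverse z ^ l) (T_op N A i (\<lambda>z. inverse z ^ k)))"

definition sigma_map :: "nat \<Rightarrow> (complex \<Rightarrow> complex mat) \<Rightarrow> nat \<Rightarrow> complex mat \<Rightarrow> complex mat" where
  "sigma_map N A n X = mat n n (\<lambda>(a,b).
     \<Sum>i<N. (V_mat N A n i * X * mat_adjoint (V_mat N A n i)) $$ (a,b))"

definition is_state :: "nat \<Rightarrow> (complex mat \<Rightarrow> complex) \<Rightarrow> bool" where
  "is_state n \<rho> \<longleftrightarrow>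
     (\<forall>X\<in>carrier_mat n n. \<forall>Y\<in>carrier_mat n n. \<rho> (X + Y) = \<rho> X + \<rho> Y) \<and>
     (\<forall>c. \<forall>X\<in>carrier_mat n n. \<rho> (c \<cdot>\<^sub>m X) = c * \<rho> X) \<and>
     (\<forall>X\<in>carrier_mat n n. Im (\<rho> (mat_adjoint X * X)) = 0 \<and> Re (\<rho> (mat_adjoint X * X)) \<ge> 0) \<and>
     \<rho> (1\<^sub>m n) = 1"

definition is_faithful :: "nat \<Rightarrow> (complex mat \<Rightarrow> complex) \<Rightarrow> bool" where
  "is_faithful n \<rho> \<longleftrightarrow> (\<forall>X\<in>carrier_mat n n. \<rho> (mat_adjoint X * X) = 0 \<longrightarrow> X = 0\<^sub>m n n)"

end

theory Submission
  imports Defs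
begin

text \<open>Let e_0 be the constant function 1. Only non-negative powers of z occur in m_i, so
  V_i e_0 = A^(0)_{i,0} e_0, and sigma maps the rank-one projection Q onto e_0 to s Q with
  s = \<Sum>_i |A^(0)_{i,0}|^2. A faithful invariant state has rho(Q) > 0, hence s = 1.
  By Parseval the unit column A(z) e_0 satisfies \<Sum>_k \<Sum>_i |A^(k)_{i,0}|^2 = 1, so its higher
  coefficients vanish and A(z) e_0 = u is constant. With V = A(1), whose first column is u,
  V^* A(z) has first column e_0 and is therefore 1 \<oplus> B(z) by unitarity: A splits off a
  one-dimensional diagonal block.\<close>

lemma mat_adjoint_dim [simp]:
  "dim_row (mat_adjoint A) = dim_col A" "dim_col (mat_adjoint A) = dim_row A"
  unfolding mat_adjoint_def by auto

lemma index_mat_adjoint [simp]: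
  "i < dim_col A \<Longrightarrow> j < dim_row A \<Longrightarrow> mat_adjoint A $$ (i,j) = cnj (A $$ (j,i))"
  unfolding mat_adjoint_def by (simp add: mat_of_rows_index)

lemma mat_adjoint_carrier: "A \<in> carrier_mat n m \<Longrightarrow> mat_adjoint A \<in> carrier_mat m n"
  by auto

lemma mat_adjoint_adjoint [simp]: "mat_adjoint (mat_adjoint A) = (A :: complex mat)"
  by (rule eq_matI) auto

lemma index_mult_mat_sum:
  "i < dim_row A \<Longrightarrow> j < dim_col B \<Longrightarrow> dim_col A = dim_row B \<Longrightarrow>
   (A * B) $$ (i,j) = (\<Sum>k<dim_row B. A $$ (i,k) * B $$ (k,j))"
  by (simp add: scalar_prod_def atLeast0LessThan)

declare index_mult_mat(1) [simp del]

lemma mat_adjoint_mult: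
  assumes A: "(A :: complex mat) \<in> carrier_mat n m" and B: "B \<in> carrier_mat m k"
  shows "mat_adjoint (A * B) = mat_adjoint B * mat_adjoint A"
proof (rule eq_matI)
  fix i j assume "i < dim_row (mat_adjoint B * mat_adjoint A)" "j < dim_col (mat_adjoint B * mat_adjoint A)"
  then have i: "i < k" and j: "j < n" using A B by auto
  have "mat_adjoint (A * B) $$ (i,j) = cnj (\<Sum>l<m. A $$ (j,l) * B $$ (l,i))"
    using A B i j by (simp add: index_mult_mat_sum)
  also have "\<dots> = (\<Sum>l<m. mat_adjoint B $$ (i,l) * mat_adjoint A $$ (l,j))"
    using A B i j by (auto simp: mult.commute intro: sum.cong)
  also have "\<dots> = (mat_adjoint B * mat_adjoint A) $$ (i,j)"
    using A B i j by (simp add: index_mult_mat_sum)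
  finally show "mat_adjoint (A * B) $$ (i,j) = (mat_adjoint B * mat_adjoint A) $$ (i,j)" .
qed (use A B in auto)

lemma unitary_mat_adjoint: "unitary_mat n U \<Longrightarrow> unitary_mat n (mat_adjoint U)"
  unfolding unitary_mat_def by auto

lemma unitary_mat_mult:
  assumes U: "unitary_mat n U" and X: "unitary_mat n X"
  shows "unitary_mat n (U * X)"
proof -
  have Uc: "U \<in> carrier_mat n n" and Xc: "X \<in> carrier_mat n n"
    and U1: "U * mat_adjoint U = 1\<^sub>m n" "mat_adjoint U * U = 1\<^sub>m n"
    and X1: "X * mat_adjoint X = 1\<^sub>m n" "mat_adjoint X * X = 1\<^sub>m n"
    using U X unfolding unitary_mat_def by auto
  have UHc: "mat_adjoint U \<in> carrier_mat n n" and XHc: "mat_adjoint X \<in> carrier_mat n n"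
    using Uc Xc by (simp_all add: mat_adjoint_carrier)
  have adj: "mat_adjoint (U * X) = mat_adjoint X * mat_adjoint U"
    using Uc Xc by (rule mat_adjoint_mult)
  have "mat_adjoint X * mat_adjoint U * (U * X) = mat_adjoint X * (mat_adjoint U * U) * X"
    using Uc Xc UHc XHc by (simp add: assoc_mult_mat[of _ n n _ n _ n])
  also have "\<dots> = 1\<^sub>m n" using U1 X1 by (simp add: right_mult_one_mat[OF XHc])
  finally have 1: "mat_adjoint (U * X) * (U * X) = 1\<^sub>m n" using adj by simp
  have "U * X * (mat_adjoint X * mat_adjoint U) = U * (X * mat_adjoint X) * mat_adjoint U"
    using Uc Xc UHc XHc by (simp add: assoc_mult_mat[of _ n n _ n _ n])
  also have "\<dots> = 1\<^sub>m n" using U1 X1 by (simp add: right_mult_one_mat[OF Uc])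
  finally have 2: "U * X * mat_adjoint (U * X) = 1\<^sub>m n" using adj by simp
  show ?thesis unfolding unitary_mat_def using 1 2 Uc Xc by auto
qed

lemma unitary_mat_col_norm:
  assumes U: "unitary_mat n U" and j: "j < n"
  shows "(\<Sum>i<n. cnj (U $$ (i,j)) * U $$ (i,j)) = 1"
proof -
  have Uc: "U \<in> carrier_mat n n" and "mat_adjoint U * U = 1\<^sub>m n"
    using U unfolding unitary_mat_def by auto
  then have "(mat_adjoint U * U) $$ (j,j) = 1" using j by simp
  then show ?thesis using Uc j by (simp add: index_mult_mat_sum)
qed

subsection \<open>Splitting off a unit first column\<close>

definition lower_right_block :: "'a mat \<Rightarrow> 'a mat" where
  "lower_right_block M = mat (dim_row M - 1) (dim_col M - 1) (\<lambda>(i,j). M $$ (Suc i, Suc j))"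

lemma lower_right_block_carrier:
  "M \<in> carrier_mat n m \<Longrightarrow> lower_right_block M \<in> carrier_mat (n - 1) (m - 1)"
  unfolding lower_right_block_def by auto

lemma unitary_mat_first_row_unit:
  assumes W: "unitary_mat n W" and j: "j < n"
    and col: "\<And>i. i < n \<Longrightarrow> W $$ (i,0) = (if i = 0 then 1 else 0)"
  shows "W $$ (0,j) = (if j = 0 then 1 else 0)"
proof -
  have Wc: "W \<in> carrier_mat n n" and "mat_adjoint W * W = 1\<^sub>m n"
    using W unfolding unitary_mat_def by auto
  then have "(mat_adjoint W * W) $$ (0,j) = (if j = 0 then 1 else 0)" using j by auto
  then have "(\<Sum>k<n. cnj (W $$ (k,0)) * W $$ (k,j)) = (if j = 0 then 1 else 0)"
    using Wc j by (simp add: index_mult_mat_sum)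
  also have "(\<Sum>k<n. cnj (W $$ (k,0)) * W $$ (k,j)) = (\<Sum>k<n. if k = 0 then W $$ (0,j) else 0)"
    using col by (intro sum.cong) auto
  finally show ?thesis using j by simp
qed

lemma eq_block_diag3_lower_right_block:
  assumes Wc: "W \<in> carrier_mat n n" and n: "0 < n"
    and col: "\<And>i. i < n \<Longrightarrow> W $$ (i,0) = (if i = 0 then 1 else 0)"
    and row: "\<And>j. j < n \<Longrightarrow> W $$ (0,j) = (if j = 0 then 1 else 0)"
  shows "W = block_diag3 1 (n - 1) 0 (1\<^sub>m 1) (lower_right_block W) (1\<^sub>m 0)"
proof (rule eq_matI)
  fix i j assume "i < dim_row (block_diag3 1 (n - 1) 0 (1\<^sub>m 1) (lower_right_block W) (1\<^sub>m 0))"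
    "j < dim_col (block_diag3 1 (n - 1) 0 (1\<^sub>m 1) (lower_right_block W) (1\<^sub>m 0))"
  then have "i < n" "j < n" using Wc n by (auto simp: block_diag3_def lower_right_block_def)
  then show "W $$ (i,j) = block_diag3 1 (n - 1) 0 (1\<^sub>m 1) (lower_right_block W) (1\<^sub>m 0) $$ (i,j)"
    unfolding block_diag3_def lower_right_block_def using Wc col row
    by (cases "i = 0"; cases "j = 0") (auto simp: index_mat_four_block)
qed (use Wc n in \<open>auto simp: block_diag3_def lower_right_block_def\<close>)

lemma unitary_mat_lower_right_block:
  assumes W: "unitary_mat n W"
    and col: "\<And>i. i < n \<Longrightarrow> W $$ (i,0) = (if i = 0 then 1 else 0)"
    and row: "\<And>j. j < n \<Longrightarrow> W $$ (0,j) = (if j = 0 then 1 else 0)"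
  shows "unitary_mat (n - 1) (lower_right_block W)"
proof -
  let ?B = "lower_right_block W"
  have Wc: "W \<in> carrier_mat n n" and W1: "W * mat_adjoint W = 1\<^sub>m n" "mat_adjoint W * W = 1\<^sub>m n"
    using W unfolding unitary_mat_def by auto
  have Bc: "?B \<in> carrier_mat (n - 1) (n - 1)" using Wc by (rule lower_right_block_carrier)
  have sum_shift: "(\<Sum>k<n - 1. f (Suc k)) = (\<Sum>k<n. f k)"
    if "f 0 = 0" "0 < n" for f :: "nat \<Rightarrow> complex"
    using that by (cases n) (simp_all add: sum.lessThan_Suc_shift del: sum.lessThan_Suc)
  have "mat_adjoint ?B * ?B = 1\<^sub>m (n - 1)"
  proof (rule eq_matI)
    fix i j assume "i < dim_row (1\<^sub>m (n - 1))" "j < dim_col (1\<^sub>m (n - 1))"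
    then have ij: "i < n - 1" "j < n - 1" by auto
    have "(mat_adjoint ?B * ?B) $$ (i,j) = (\<Sum>k<n - 1. cnj (W $$ (Suc k, Suc i)) * W $$ (Suc k, Suc j))"
      using Bc Wc ij by (simp add: index_mult_mat_sum lower_right_block_def)
    also have "\<dots> = (\<Sum>k<n. cnj (W $$ (k, Suc i)) * W $$ (k, Suc j))"
      using row ij by (intro sum_shift) auto
    also have "\<dots> = (mat_adjoint W * W) $$ (Suc i, Suc j)"
      using Wc ij by (simp add: index_mult_mat_sum)
    finally show "(mat_adjoint ?B * ?B) $$ (i,j) = 1\<^sub>m (n - 1) $$ (i,j)" using W1 ij by simp
  qed (use Bc in auto)
  moreover have "?B * mat_adjoint ?B = 1\<^sub>m (n - 1)"
  proof (rule eq_matI)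
    fix i j assume "i < dim_row (1\<^sub>m (n - 1))" "j < dim_col (1\<^sub>m (n - 1))"
    then have ij: "i < n - 1" "j < n - 1" by auto
    have "(?B * mat_adjoint ?B) $$ (i,j) = (\<Sum>k<n - 1. W $$ (Suc i, Suc k) * cnj (W $$ (Suc j, Suc k)))"
      using Bc Wc ij by (simp add: index_mult_mat_sum lower_right_block_def)
    also have "\<dots> = (\<Sum>k<n. W $$ (Suc i, k) * cnj (W $$ (Suc j, k)))"
      using col ij by (intro sum_shift) auto
    also have "\<dots> = (W * mat_adjoint W) $$ (Suc i, Suc j)"
      using Wc ij by (simp add: index_mult_mat_sum)
    finally show "(?B * mat_adjoint ?B) $$ (i,j) = 1\<^sub>m (n - 1) $$ (i,j)" using W1 ij by simp
  qed (use Bc in auto)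
  ultimately show ?thesis unfolding unitary_mat_def using Bc by blast
qed

lemma poly_mat_fun_carrier: "poly_mat_fun n deg C z \<in> carrier_mat n n"
  unfolding poly_mat_fun_def by simp

lemma poly_mat_fun_dim [simp]:
  "dim_row (poly_mat_fun n deg C z) = n" "dim_col (poly_mat_fun n deg C z) = n"
  unfolding poly_mat_fun_def by simp_all

lemma mult_poly_mat_fun:
  assumes M: "M \<in> carrier_mat n n" and C: "\<forall>k<deg. C k \<in> carrier_mat n n"
  shows "M * poly_mat_fun n deg C z = poly_mat_fun n deg (\<lambda>k. M * C k) z"
proof (rule eq_matI)
  fix i j assume "i < dim_row (poly_mat_fun n deg (\<lambda>k. M * C k) z)"
    "j < dim_col (poly_mat_fun n deg (\<lambda>k. M * C k) z)"
  then have ij: "i < n" "j < n" unfolding poly_mat_fun_def by auto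
  have "(M * poly_mat_fun n deg C z) $$ (i,j) = (\<Sum>s<n. M $$ (i,s) * (\<Sum>k<deg. z ^ k * C k $$ (s,j)))"
    using M ij by (simp add: index_mult_mat_sum poly_mat_fun_def)
  also have "\<dots> = (\<Sum>k<deg. z ^ k * (\<Sum>s<n. M $$ (i,s) * C k $$ (s,j)))"
    by (simp add: sum_distrib_left sum.swap[of _ "{..<deg}"] mult_ac)
  also have "\<dots> = poly_mat_fun n deg (\<lambda>k. M * C k) z $$ (i,j)"
    using M C ij by (auto simp: poly_mat_fun_def index_mult_mat_sum intro!: sum.cong)
  finally show "(M * poly_mat_fun n deg C z) $$ (i,j) = poly_mat_fun n deg (\<lambda>k. M * C k) z $$ (i,j)" .
qed (use M in \<open>auto simp: poly_mat_fun_def\<close>)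

lemma lower_right_block_poly_mat_fun:
  assumes "\<forall>k<deg. C k \<in> carrier_mat n n"
  shows "lower_right_block (poly_mat_fun n deg C z) =
    poly_mat_fun (n - 1) deg (\<lambda>k. lower_right_block (C k)) z"
proof (rule eq_matI)
  fix i j assume "i < dim_row (poly_mat_fun (n - 1) deg (\<lambda>k. lower_right_block (C k)) z)"
    "j < dim_col (poly_mat_fun (n - 1) deg (\<lambda>k. lower_right_block (C k)) z)"
  then have "i < n - 1" "j < n - 1" by (simp_all add: poly_mat_fun_def)
  then show "lower_right_block (poly_mat_fun n deg C z) $$ (i,j) =
      poly_mat_fun (n - 1) deg (\<lambda>k. lower_right_block (C k)) z $$ (i,j)"
    using assms by (auto simp: lower_right_block_def poly_mat_fun_def intro!: sum.cong)
qed (simp_all add: lower_right_block_def poly_mat_fun_def)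

lemma diagonal_loop_one: "diagonal_loop d (\<lambda>z. 1\<^sub>m d)"
proof -
  have "mat d d (\<lambda>(i,j). if i = j then z ^ 0 else 0) = (1\<^sub>m d :: complex mat)" for z :: complex
    by (rule eq_matI) auto
  then show ?thesis unfolding diagonal_loop_def unitary_mat_def
    by (intro exI[of _ "1\<^sub>m d"] exI[of _ "\<lambda>_. 0"]) (auto intro: eq_matI)
qed

lemma constant_first_column_not_purely_non_diagonal:
  assumes N: "0 < N" and C: "\<forall>k<g. C k \<in> carrier_mat N N"
    and A: "\<forall>z. cmod z = 1 \<longrightarrow> unitary_mat N (poly_mat_fun N g C z)"
    and const: "\<And>z i. cmod z = 1 \<Longrightarrow> i < N \<Longrightarrow>
      poly_mat_fun N g C z $$ (i,0) = poly_mat_fun N g C 1 $$ (i,0)"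
  shows "\<not> purely_non_diagonal N (poly_mat_fun N g C)"
proof -
  define V where "V = poly_mat_fun N g C 1"
  define W where "W z = mat_adjoint V * poly_mat_fun N g C z" for z
  have V: "unitary_mat N V" using A by (simp add: V_def)
  then have Vc: "V \<in> carrier_mat N N" and Vdim: "dim_row V = N" "dim_col V = N"
    and V1: "V * mat_adjoint V = 1\<^sub>m N" "mat_adjoint V * V = 1\<^sub>m N"
    unfolding unitary_mat_def by auto
  have VC: "\<forall>k<g. mat_adjoint V * C k \<in> carrier_mat N N"
    using C mult_carrier_mat[OF mat_adjoint_carrier[OF Vc]] by blast
  have W: "unitary_mat N (W z)" if "cmod z = 1" for z
    unfolding W_def using unitary_mat_mult[OF unitary_mat_adjoint[OF V]] A that by simp
  have W_poly: "W z = poly_mat_fun N g (\<lambda>k. mat_adjoint V * C k) z" for z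
    unfolding W_def using Vc C by (intro mult_poly_mat_fun) auto
  have col: "W z $$ (i,0) = (if i = 0 then 1 else 0)" if z: "cmod z = 1" and i: "i < N" for z i
  proof -
    have "poly_mat_fun N g C z $$ (s,0) = V $$ (s,0)" if "s < N" for s
      unfolding V_def using z that by (rule const)
    then have "W z $$ (i,0) = (mat_adjoint V * V) $$ (i,0)"
      unfolding W_def using Vdim N i by (simp add: index_mult_mat_sum)
    then show ?thesis using V1 N i by simp
  qed
  define B where "B z = lower_right_block (W z)" for z
  have B: "poly_loop (N - 1) B"
    unfolding poly_loop_def B_def W_poly
  proof (intro exI[of _ g] exI[of _ "\<lambda>k. lower_right_block (mat_adjoint V * C k)"] conjI allI impI)
    show "lower_right_block (mat_adjoint V * C k) \<in> carrier_mat (N - 1) (N - 1)" if "k < g" for k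
      using VC that by (intro lower_right_block_carrier) auto
    fix z :: complex assume z: "cmod z = 1"
    show "lower_right_block (poly_mat_fun N g (\<lambda>k. mat_adjoint V * C k) z) =
      poly_mat_fun (N - 1) g (\<lambda>k. lower_right_block (mat_adjoint V * C k)) z"
      using VC by (rule lower_right_block_poly_mat_fun)
    show "unitary_mat (N - 1) (lower_right_block (poly_mat_fun N g (\<lambda>k. mat_adjoint V * C k) z))"
      using unitary_mat_lower_right_block[OF W[OF z] col[OF z] unitary_mat_first_row_unit[OF W[OF z] _ col[OF z]]]
      by (simp add: W_poly)
  qed
  have split: "poly_mat_fun N g C z = V * block_diag3 1 (N - 1) 0 (1\<^sub>m 1) (B z) (1\<^sub>m 0)"
    if z: "cmod z = 1" for z
  proof -
    have "W z = block_diag3 1 (N - 1) 0 (1\<^sub>m 1) (B z) (1\<^sub>m 0)"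
      unfolding B_def using W[OF z] N col[OF z] unitary_mat_first_row_unit[OF W[OF z] _ col[OF z]]
      by (intro eq_block_diag3_lower_right_block) (auto simp: unitary_mat_def)
    moreover have "V * W z = poly_mat_fun N g C z"
      unfolding W_def
      using assoc_mult_mat[OF Vc mat_adjoint_carrier[OF Vc] poly_mat_fun_carrier] V1
      by (simp add: left_mult_one_mat[OF poly_mat_fun_carrier])
    ultimately show ?thesis by simp
  qed
  show ?thesis
    unfolding purely_non_diagonal_def not_not
    by (intro exI[of _ 1] exI[of _ "N - 1"] exI[of _ 0] exI[of _ "\<lambda>_. 1\<^sub>m 1"] exI[of _ B]
        exI[of _ "\<lambda>_. 1\<^sub>m 0"] exI[of _ V]) (use N V B split diagonal_loop_one in auto)
qed

subsection \<open>Fourier analysis on the circle\<close>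

lemma has_integral_cis_int:
  fixes m :: int
  shows "((\<lambda>t. cis (2 * pi * m * t)) has_integral (if m = 0 then 1 else 0)) {0..1}"
proof (cases "m = 0")
  case True
  then show ?thesis using has_integral_const_real[of "1::complex" 0 1] by simp
next
  case False
  define c where "c = \<i> * complex_of_real (2 * pi * m)"
  have "c \<noteq> 0" using False by (simp add: c_def)
  then have "((\<lambda>x. exp (c * of_real x) / c) has_vector_derivative exp (c * of_real x))
      (at x within {0..1})" for x
    by (intro has_vector_derivative_real_field[where f="\<lambda>z. exp (c * z) / c"])
      (auto intro!: derivative_eq_intros)
  then have "((\<lambda>t. exp (c * of_real t)) has_integral
      (exp (c * of_real 1) / c - exp (c * of_real 0) / c)) {0..1::real}"
    by (intro fundamental_theorem_of_calculus) auto
  moreover have "exp c = 1" unfolding c_def exp_eq_1 by (auto intro!: exI[of _ m])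
  moreover have "cis (2 * pi * m * t) = exp (c * of_real t)" for t
    by (simp add: cis_conv_exp c_def mult_ac)
  ultimately show ?thesis using False by simp
qed

lemma has_integral_cnj_circ_power_mult:
  "((\<lambda>t. cnj (circ t) ^ q * circ t ^ p) has_integral (if p = q then 1 else 0)) {0..1}"
proof -
  have "cnj (circ t) ^ q * circ t ^ p = cis (2 * pi * real_of_int (int p - int q) * t)" for t
    unfolding circ_def cis_cnj Complex.DeMoivre cis_mult by (simp add: algebra_simps)
  then show ?thesis using has_integral_cis_int[of "int p - int q"] by simp
qed

lemma poly_mat_fun_col_parseval:
  assumes A: "\<forall>z. cmod z = 1 \<longrightarrow> unitary_mat N (poly_mat_fun N g C z)" and j: "j < N"
  shows "(\<Sum>i<N. \<Sum>k<g. cnj (C k $$ (i,j)) * C k $$ (i,j)) = 1"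
proof -
  have pointwise: "(\<Sum>i<N. \<Sum>q<g. \<Sum>p<g.
      cnj (C q $$ (i,j)) * C p $$ (i,j) * (cnj (circ t) ^ q * circ t ^ p)) = 1" for t
  proof -
    have "(\<Sum>i<N. cnj (poly_mat_fun N g C (circ t) $$ (i,j)) * poly_mat_fun N g C (circ t) $$ (i,j)) = 1"
      using A j unfolding circ_def by (intro unitary_mat_col_norm) auto
    then show ?thesis using j
      by (simp add: poly_mat_fun_def sum_distrib_left sum_distrib_right algebra_simps)
  qed
  have "((\<lambda>t. \<Sum>i<N. \<Sum>q<g. \<Sum>p<g.
      cnj (C q $$ (i,j)) * C p $$ (i,j) * (cnj (circ t) ^ q * circ t ^ p)) has_integral
     (\<Sum>i<N. \<Sum>q<g. \<Sum>p<g. cnj (C q $$ (i,j)) * C p $$ (i,j) * (if p = q then 1 else 0))) {0..1}"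
    by (intro has_integral_sum finite_lessThan has_integral_mult_right has_integral_cnj_circ_power_mult)
  then have "((\<lambda>t. 1) has_integral (\<Sum>i<N. \<Sum>k<g. cnj (C k $$ (i,j)) * C k $$ (i,j))) {0..1::real}"
    by (simp add: pointwise if_distrib[of "\<lambda>x. _ * x"] sum.delta cong: if_cong)
  moreover have "((\<lambda>t. 1) has_integral (1::complex)) {0..1::real}"
    using has_integral_const_real[of "1::complex" 0 1] by simp
  ultimately show ?thesis by (rule has_integral_unique)
qed

lemma poly_mat_fun_col_constant:
  assumes A: "\<forall>z. cmod z = 1 \<longrightarrow> unitary_mat N (poly_mat_fun N g C z)" and j: "j < N"
    and unit: "(\<Sum>i<N. cnj (C 0 $$ (i,j)) * C 0 $$ (i,j)) = 1" and i: "i < N"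
  shows "poly_mat_fun N g C z $$ (i,j) = C 0 $$ (i,j)"
proof -
  define r where "r i k = (cmod (C k $$ (i,j)))\<^sup>2" for i k
  have cnj_mult: "cnj (C k $$ (i,j)) * C k $$ (i,j) = complex_of_real (r i k)" for i k
    unfolding r_def complex_norm_square by (simp add: mult.commute)
  have "complex_of_real (\<Sum>i<N. \<Sum>k<g. r i k) = 1"
    using poly_mat_fun_col_parseval[OF A j] by (simp add: cnj_mult)
  then have parseval: "(\<Sum>i<N. \<Sum>k<g. r i k) = 1" by (simp only: of_real_eq_1_iff)
  then have "g \<noteq> 0" by (intro notI) simp
  then have "{..<g} = insert 0 {1..<g}" by auto
  then have "(\<Sum>i<N. \<Sum>k<g. r i k) = (\<Sum>i<N. r i 0) + (\<Sum>i<N. \<Sum>k\<in>{1..<g}. r i k)"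
    by (simp add: sum.distrib)
  moreover have "complex_of_real (\<Sum>i<N. r i 0) = 1"
    using unit by (simp add: cnj_mult)
  ultimately have "(\<Sum>i<N. \<Sum>k\<in>{1..<g}. r i k) = 0" using parseval by (simp only: of_real_eq_1_iff)
  then have "\<forall>i<N. \<forall>k\<in>{1..<g}. r i k = 0"
    by (simp add: sum_nonneg sum_nonneg_eq_0_iff r_def)
  then have "C k $$ (i,j) = 0" if "0 < k" "k < g" for k
    using i that unfolding r_def by simp
  then have "(\<Sum>k<g. z ^ k * C k $$ (i,j)) = (\<Sum>k<g. if k = 0 then C 0 $$ (i,j) else 0)"
    by (intro sum.cong) auto
  then show ?thesis using i j \<open>g \<noteq> 0\<close> by (simp add: poly_mat_fun_def)
qed

lemma index_V_mat:
  assumes l: "l < n" and k: "k < n" and i: "i < N"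
  shows "V_mat N (poly_mat_fun N g C) n i $$ (l,k) =
    (\<Sum>j<N. \<Sum>p<g. if N * p + j + l = N * k then C p $$ (i,j) else 0)"
proof -
  have integrand: "cnj (inverse (circ t) ^ l) * T_op N (poly_mat_fun N g C) i (\<lambda>z. inverse z ^ k) (circ t)
     = (\<Sum>j<N. \<Sum>p<g. C p $$ (i,j) * (cnj (circ t) ^ (N * k) * circ t ^ (N * p + j + l)))" for t
  proof -
    have inv: "inverse (circ t) = cnj (circ t)" by (simp add: circ_def cis_cnj)
    have "cnj (inverse (circ t) ^ l) = circ t ^ l" "inverse (circ t ^ N) ^ k = cnj (circ t) ^ (N * k)"
      "(circ t ^ N) ^ p = circ t ^ (N * p)" for p
      by (simp_all add: inv power_mult flip: power_inverse)
    then show ?thesis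
      unfolding T_op_def filter_m_def poly_mat_fun_def using i
      by (simp add: sum_distrib_left sum_distrib_right power_add mult_ac sum.swap[of _ "{..<N}"])
  qed
  have "((\<lambda>t. \<Sum>j<N. \<Sum>p<g.
      C p $$ (i,j) * (cnj (circ t) ^ (N * k) * circ t ^ (N * p + j + l))) has_integral
      (\<Sum>j<N. \<Sum>p<g. C p $$ (i,j) * (if N * p + j + l = N * k then 1 else 0))) {0..1}"
    by (intro has_integral_sum finite_lessThan has_integral_mult_right has_integral_cnj_circ_power_mult)
  then have "integral {0..1} (\<lambda>t.
      cnj (inverse (circ t) ^ l) * T_op N (poly_mat_fun N g C) i (\<lambda>z. inverse z ^ k) (circ t)) =
      (\<Sum>j<N. \<Sum>p<g. if N * p + j + l = N * k then C p $$ (i,j) else 0)"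
    unfolding integrand by (simp add: integral_unique if_distrib[of "\<lambda>x. _ * x"] cong: if_cong)
  then show ?thesis using l k by (simp add: V_mat_def l2_inner_def)
qed

lemma V_mat_carrier [simp]: "V_mat N A n i \<in> carrier_mat n n"
  unfolding V_mat_def by simp

lemma index_V_mat_first_col:
  assumes "0 < N" "0 < g" "l < n" "i < N"
  shows "V_mat N (poly_mat_fun N g C) n i $$ (l,0) = (if l = 0 then C 0 $$ (i,0) else 0)"
proof -
  have "(\<Sum>j<N. \<Sum>p<g. if N * p + j + l = 0 then C p $$ (i,j) else 0) =
      (\<Sum>j<N. if j = 0 then (\<Sum>p<g. if p = 0 then (if l = 0 then C 0 $$ (i,0) else 0) else 0) else 0)"
    by (intro sum.cong refl) (auto intro: sum.cong)
  then show ?thesis using assms index_V_mat[of l n 0 i N g C] by simp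
qed

subsection \<open>Invariant states and the projection onto the constants\<close>

definition proj_e0 :: "nat \<Rightarrow> complex mat" where
  "proj_e0 n = mat n n (\<lambda>(a,b). if a = 0 \<and> b = 0 then 1 else 0)"

lemma proj_e0_dim [simp]: "dim_row (proj_e0 n) = n" "dim_col (proj_e0 n) = n"
  unfolding proj_e0_def by simp_all

lemma proj_e0_carrier [simp]: "proj_e0 n \<in> carrier_mat n n"
  unfolding proj_e0_def by simp

lemma proj_e0_nonzero:
  assumes "0 < n" shows "proj_e0 n \<noteq> 0\<^sub>m n n"
proof
  assume "proj_e0 n = 0\<^sub>m n n"
  then have "proj_e0 n $$ (0,0) = 0\<^sub>m n n $$ (0,0)" by simp
  then show False using assms by (simp add: proj_e0_def)
qed

lemma mat_adjoint_proj_e0_mult: "mat_adjoint (proj_e0 n) * proj_e0 n = proj_e0 n"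
proof (rule eq_matI)
  fix a b assume "a < dim_row (proj_e0 n)" "b < dim_col (proj_e0 n)"
  then have ab: "a < n" "b < n" by (simp_all add: proj_e0_def)
  then have "(\<Sum>k<n. cnj (proj_e0 n $$ (k,a)) * proj_e0 n $$ (k,b)) =
      (\<Sum>k<n. if k = 0 then proj_e0 n $$ (a,b) else 0)"
    by (intro sum.cong) (auto simp: proj_e0_def)
  then show "(mat_adjoint (proj_e0 n) * proj_e0 n) $$ (a,b) = proj_e0 n $$ (a,b)"
    using ab by (simp add: index_mult_mat_sum)
qed auto

lemma index_conj_proj_e0:
  assumes V: "V \<in> carrier_mat n n" and ab: "a < n" "b < n"
  shows "(V * proj_e0 n * mat_adjoint V) $$ (a,b) = V $$ (a,0) * cnj (V $$ (b,0))"
proof -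
  have VQ: "(V * proj_e0 n) $$ (a,k) = (if k = 0 then V $$ (a,0) else 0)" if "k < n" for k
  proof -
    have "(\<Sum>c<n. V $$ (a,c) * proj_e0 n $$ (c,k)) =
        (\<Sum>c<n. if c = 0 then (if k = 0 then V $$ (a,0) else 0) else 0)"
      using that by (intro sum.cong) (auto simp: proj_e0_def)
    then show ?thesis using carrier_matD[OF V] ab that by (simp add: index_mult_mat_sum)
  qed
  have "(V * proj_e0 n * mat_adjoint V) $$ (a,b) = (\<Sum>k<n. (V * proj_e0 n) $$ (a,k) * cnj (V $$ (b,k)))"
    using carrier_matD[OF V] ab by (simp add: index_mult_mat_sum)
  also have "\<dots> = (\<Sum>k<n. if k = 0 then V $$ (a,0) * cnj (V $$ (b,0)) else 0)"
    using VQ by (intro sum.cong) auto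
  finally show ?thesis using ab by simp
qed

lemma sigma_map_proj_e0:
  assumes N: "0 < N" and g: "0 < g" and n: "0 < n"
  shows "sigma_map N (poly_mat_fun N g C) n (proj_e0 n) =
    (\<Sum>i<N. cnj (C 0 $$ (i,0)) * C 0 $$ (i,0)) \<cdot>\<^sub>m proj_e0 n"
proof (rule eq_matI)
  fix a b assume "a < dim_row ((\<Sum>i<N. cnj (C 0 $$ (i,0)) * C 0 $$ (i,0)) \<cdot>\<^sub>m proj_e0 n)"
    "b < dim_col ((\<Sum>i<N. cnj (C 0 $$ (i,0)) * C 0 $$ (i,0)) \<cdot>\<^sub>m proj_e0 n)"
  then have ab: "a < n" "b < n" by simp_all
  let ?V = "V_mat N (poly_mat_fun N g C) n"
  have "(?V i * proj_e0 n * mat_adjoint (?V i)) $$ (a,b) =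
      cnj (C 0 $$ (i,0)) * C 0 $$ (i,0) * proj_e0 n $$ (a,b)" if "i < N" for i
  proof -
    have "(?V i * proj_e0 n * mat_adjoint (?V i)) $$ (a,b) = ?V i $$ (a,0) * cnj (?V i $$ (b,0))"
      using ab by (intro index_conj_proj_e0) simp_all
    then show ?thesis
      using index_V_mat_first_col[OF N g ab(1) that] index_V_mat_first_col[OF N g ab(2) that] ab
      by (simp add: proj_e0_def)
  qed
  then show "sigma_map N (poly_mat_fun N g C) n (proj_e0 n) $$ (a,b) =
      ((\<Sum>i<N. cnj (C 0 $$ (i,0)) * C 0 $$ (i,0)) \<cdot>\<^sub>m proj_e0 n) $$ (a,b)"
    using ab by (simp add: sigma_map_def sum_distrib_right)
qed (simp_all add: sigma_map_def)

lemma faithful_invariant_state_eigenvalue: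
  assumes state: "is_state n \<rho>" and faithful: "is_faithful n \<rho>"
    and invariant: "\<forall>X\<in>carrier_mat n n. \<rho> (\<sigma> X) = \<rho> X"
    and P: "P \<in> carrier_mat n n" "mat_adjoint P * P = P" "P \<noteq> 0\<^sub>m n n"
    and eigen: "\<sigma> P = s \<cdot>\<^sub>m P"
  shows "s = 1"
proof -
  have "\<rho> (mat_adjoint P * P) = 0 \<longrightarrow> P = 0\<^sub>m n n"
    using faithful P(1) unfolding is_faithful_def by blast
  then have "\<rho> P \<noteq> 0" using P(2,3) by simp
  have "\<rho> (s \<cdot>\<^sub>m P) = s * \<rho> P" using state P(1) unfolding is_state_def by blast
  moreover have "\<rho> (\<sigma> P) = \<rho> P" using invariant P(1) by blast
  ultimately have "s * \<rho> P = \<rho> P" using eigen by simp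
  then show ?thesis using \<open>\<rho> P \<noteq> 0\<close> by simp
qed

theorem no_faithful_invariant_state:
  assumes N: "0 < N" and g: "0 < g" and n: "0 < n"
    and C: "\<forall>k<g. C k \<in> carrier_mat N N"
    and A: "\<forall>z. cmod z = 1 \<longrightarrow> unitary_mat N (poly_mat_fun N g C z)"
    and pure: "purely_non_diagonal N (poly_mat_fun N g C)"
  shows "\<not> (\<exists>\<rho>. is_state n \<rho> \<and> is_faithful n \<rho> \<and>
              (\<forall>X\<in>carrier_mat n n. \<rho> (sigma_map N (poly_mat_fun N g C) n X) = \<rho> X))"
proof (intro notI, elim exE conjE)
  fix \<rho> assume state: "is_state n \<rho>" and faithful: "is_faithful n \<rho>"
    and invariant: "\<forall>X\<in>carrier_mat n n. \<rho> (sigma_map N (poly_mat_fun N g C) n X) = \<rho> X"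
  have "(\<Sum>i<N. cnj (C 0 $$ (i,0)) * C 0 $$ (i,0)) = 1"
    using state faithful invariant proj_e0_carrier mat_adjoint_proj_e0_mult proj_e0_nonzero[OF n]
      sigma_map_proj_e0[OF N g n]
    by (rule faithful_invariant_state_eigenvalue)
  then have "poly_mat_fun N g C z $$ (i,0) = C 0 $$ (i,0)" if "i < N" for z i
    using A N that by (intro poly_mat_fun_col_constant)
  then have "\<not> purely_non_diagonal N (poly_mat_fun N g C)"
    using N C A by (intro constant_first_column_not_purely_non_diagonal) auto
  then show False using pure ..
qed

theorem corollary6p10:
  fixes N g :: nat and C :: "nat \<Rightarrow> complex mat"
  assumes "N \<ge> 2" and "g \<ge> 1"
    and "\<forall>k<g. C k \<in> carrier_mat N N"
    and "C (g - 1) \<noteq> 0\<^sub>m N N"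
    and "\<forall>z. cmod z = 1 \<longrightarrow> unitary_mat N (poly_mat_fun N g C z)"
    and "purely_non_diagonal N (poly_mat_fun N g C)"
  shows "\<not> (\<exists>\<rho>. is_state ((g * N - 1) div (N - 1) + 1) \<rho> \<and>
              is_faithful ((g * N - 1) div (N - 1) + 1) \<rho> \<and>
              (\<forall>X\<in>carrier_mat ((g * N - 1) div (N - 1) + 1) ((g * N - 1) div (N - 1) + 1).
                 \<rho> (sigma_map N (poly_mat_fun N g C) ((g * N - 1) div (N - 1) + 1) X) = \<rho> X))"
  using assms by (intro no_faithful_invariant_state) auto

end
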